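(* Let $m$ be a positive integer and suppose that infinitely many of the boards $G_{m,n}$ ($n\ge 1$) have outcome class $V$. Then there exists a nonnegative integer $k<2m$ such that for every nonnegative integer $i$, the board $G_{m,k+2mi}$ has outcome class $V$.
   Context: Domineering is a two-player game played on a rectangular grid of unit squares. The players alternate placing dominoes, each covering two adjacent unoccupied squares; the player Vertical must place dominoes vertically (covering two squares in the same column), and the player Horizontal must place them horizontally (covering two squares in the same row). A player with no legal move on her turn loses. $G_{m,n}$ denotes the empty board with vertical dimension $m$ (number of rows) and horizontal dimension $n$ (number of columns). Every position has one of four outcome classes under optimal play: $V$ (Vertical wins whoever moves first), $H$ (Horizontal wins whoever moves first), $1$ (the player who moves first wins), $2$ (the player who moves second wins). *)

theory Defs
  imports Main
begin

text \<open>Domineering. A position is the set of currently free (unoccupied) cells,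
  a cell being a pair (row, column). Vertical covers (r,c),(r+1,c);
  Horizontal covers (r,c),(r,c+1).\<close>

type_synonym cells = "(nat \<times> nat) set"

definition board :: "nat \<Rightarrow> nat \<Rightarrow> cells" where
  "board m n = {0..<m} \<times> {0..<n}"

text \<open>vwin k S: Vertical, moving first on S, wins (search depth k, which is
  exact whenever card S \<le> k, since each move removes two cells).
  hwin likewise for Horizontal.\<close>

fun vwin :: "nat \<Rightarrow> cells \<Rightarrow> bool" and hwin :: "nat \<Rightarrow> cells \<Rightarrow> bool" where
  "vwin 0 S = False"
| "vwin (Suc k) S = (\<exists>r c. (r, c) \<in> S \<and> (Suc r, c) \<in> S \<and>
       \<not> hwin k (S - {(r, c), (Suc r, c)}))"
| "hwin 0 S = False"
| "hwin (Suc k) S = (\<exists>r c. (r, c) \<in> S \<and> (r, Suc c) \<in> S \<and>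
       \<not> vwin k (S - {(r, c), (r, Suc c)}))"

definition V_first_wins :: "cells \<Rightarrow> bool" where
  "V_first_wins S = vwin (card S) S"

definition H_first_wins :: "cells \<Rightarrow> bool" where
  "H_first_wins S = hwin (card S) S"

datatype outcome = OV | OH | ONE | TWO

definition outcome_class :: "cells \<Rightarrow> outcome" where
  "outcome_class S =
     (if V_first_wins S \<and> \<not> H_first_wins S then OV
      else if H_first_wins S \<and> \<not> V_first_wins S then OH
      else if V_first_wins S \<and> H_first_wins S then ONE
      else TWO)"

end

theory Submission
  imports Defs "HOL-Library.Infinite_Set"
begin

text \<open>Cut a board \<open>m \<times> (n + 2m)\<close> into \<open>G\<^sub>m\<^sub>,\<^sub>n\<close>, an \<open>m \<times> m\<close> square, and a
  second \<open>m \<times> m\<close> square carrying the transpose of the first.  Transposition swaps the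
  roles of the players, so whenever Vertical plays in one of the two squares, Horizontal
  can answer with the transposed move in the other.  Hence adding the two squares never
  helps Vertical: if Vertical wins \<open>G\<^sub>m\<^sub>,\<^sub>n\<^sub>+\<^sub>2\<^sub>m\<close> then Vertical wins \<open>G\<^sub>m\<^sub>,\<^sub>n\<close>.
  Thus the widths of the \<open>V\<close>-boards are closed under subtracting \<open>2m\<close>, and a residue
  class modulo \<open>2m\<close> containing infinitely many of them contains all of its members.\<close>

lemma card_remove_pair_less:
  assumes "finite S" "p \<in> S"
  shows "card (S - {p, q}) < card S"
proof -
  have "card (S - {p, q}) \<le> card (S - {p})"
    using assms(1) by (intro card_mono) auto
  also have "\<dots> < card S"
    using assms by (rule card_Diff1_less)
  finally show ?thesis .
qed

lemma vwin_hwin_depth_irrelevant: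
  assumes "finite S" "card S \<le> k" "card S \<le> k'"
  shows "vwin k S = vwin k' S \<and> hwin k S = hwin k' S"
  using assms
proof (induction k arbitrary: k' S)
  case 0
  then show ?case by (cases k') auto
next
  case (Suc k)
  show ?case
  proof (cases k')
    case 0
    with Suc.prems show ?thesis by simp
  next
    case (Suc j)
    have "vwin k (S - {p, q}) = vwin j (S - {p, q}) \<and> hwin k (S - {p, q}) = hwin j (S - {p, q})"
      if "p \<in> S" for p q
      using Suc.IH[of "S - {p, q}" j] card_remove_pair_less[OF \<open>finite S\<close> that, where q=q]
        Suc.prems \<open>k' = Suc j\<close> by simp
    then show ?thesis
      using \<open>k' = Suc j\<close> by (simp only: vwin.simps hwin.simps) blast
  qed
qed

lemma V_first_wins_iff:
  assumes "finite S"
  shows "V_first_wins S \<longleftrightarrow>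
    (\<exists>r c. (r, c) \<in> S \<and> (Suc r, c) \<in> S \<and> \<not> H_first_wins (S - {(r, c), (Suc r, c)}))"
proof (cases "card S")
  case 0
  with assms show ?thesis by (simp add: V_first_wins_def)
next
  case (Suc k)
  have "hwin k (S - {(r, c), (Suc r, c)}) = H_first_wins (S - {(r, c), (Suc r, c)})"
    if "(r, c) \<in> S" for r c
    using vwin_hwin_depth_irrelevant[of "S - {(r, c), (Suc r, c)}" k]
      card_remove_pair_less[OF assms that, where q="(Suc r, c)"] Suc assms
    by (simp add: H_first_wins_def)
  with Suc show ?thesis by (auto simp: V_first_wins_def)
qed

lemma H_first_wins_iff:
  assumes "finite S"
  shows "H_first_wins S \<longleftrightarrow>
    (\<exists>r c. (r, c) \<in> S \<and> (r, Suc c) \<in> S \<and> \<not> V_first_wins (S - {(r, c), (r, Suc c)}))"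
proof (cases "card S")
  case 0
  with assms show ?thesis by (simp add: H_first_wins_def)
next
  case (Suc k)
  have "vwin k (S - {(r, c), (r, Suc c)}) = V_first_wins (S - {(r, c), (r, Suc c)})"
    if "(r, c) \<in> S" for r c
    using vwin_hwin_depth_irrelevant[of "S - {(r, c), (r, Suc c)}" k]
      card_remove_pair_less[OF assms that, where q="(r, Suc c)"] Suc assms
    by (simp add: V_first_wins_def)
  with Suc show ?thesis by (auto simp: H_first_wins_def)
qed

lemma V_first_wins_after_H_move:
  assumes "finite S" "\<not> H_first_wins S" "(r, c) \<in> S" "(r, Suc c) \<in> S"
  shows "V_first_wins (S - {(r, c), (r, Suc c)})"
  using assms H_first_wins_iff by blast

definition mirror :: "nat \<Rightarrow> nat \<Rightarrow> cells \<Rightarrow> cells" where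
  "mirror n w a = (\<lambda>(r, c). (c - n, n + w + r)) ` a"

text \<open>For \<open>a\<close> in the column band \<open>[n, n + w)\<close>, \<open>mirror n w a\<close> is the transpose of \<open>a\<close>
  placed to the right of that band.\<close>

lemma inj_on_mirror_map:
  fixes n w :: nat
  shows "inj_on (\<lambda>(r, c). (c - n, n + w + r)) (UNIV \<times> {n..})"
  by (rule inj_onI) auto

lemma mem_mirror_iff:
  assumes "a \<subseteq> UNIV \<times> {n..<n + w}"
  shows "(x, y) \<in> mirror n w a \<longleftrightarrow> n + w \<le> y \<and> (y - (n + w), n + x) \<in> a"
proof
  assume "(x, y) \<in> mirror n w a"
  then obtain r c where "(r, c) \<in> a" "x = c - n" "y = n + w + r"
    unfolding mirror_def by auto
  moreover from this assms have "n \<le> c" by auto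
  ultimately show "n + w \<le> y \<and> (y - (n + w), n + x) \<in> a" by auto
next
  assume "n + w \<le> y \<and> (y - (n + w), n + x) \<in> a"
  then show "(x, y) \<in> mirror n w a"
    unfolding mirror_def by (auto intro!: image_eqI[where x = "(y - (n + w), n + x)"])
qed

lemma mirror_vertical_pair:
  "mirror n w {(r, c), (Suc r, c)} = {(c - n, n + w + r), (c - n, Suc (n + w + r))}"
  by (simp add: mirror_def)

lemma mirror_padding_disjoint:
  assumes "Q \<subseteq> UNIV \<times> {..<n}" "a \<subseteq> UNIV \<times> {n..<n + w}"
  shows "Q \<inter> a = {}" "Q \<inter> mirror n w a = {}" "a \<inter> mirror n w a = {}"
proof -
  have "mirror n w a \<subseteq> UNIV \<times> {n + w..}"
    unfolding mirror_def using assms(2) by auto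
  with assms show "Q \<inter> a = {}" "Q \<inter> mirror n w a = {}" "a \<inter> mirror n w a = {}"
    by (fastforce simp: subset_iff)+
qed

lemma mirror_padding_remove:
  assumes "Q \<subseteq> UNIV \<times> {..<n}" "a \<subseteq> UNIV \<times> {n..<n + w}" "E \<subseteq> a"
  shows "Q \<union> a \<union> mirror n w a - E - mirror n w E = Q \<union> (a - E) \<union> mirror n w (a - E)"
proof -
  have "mirror n w (a - E) = mirror n w a - mirror n w E"
    unfolding mirror_def using assms(2,3)
    by (intro inj_on_image_set_diff[OF inj_on_mirror_map]) auto
  moreover have "mirror n w E \<subseteq> mirror n w a"
    unfolding mirror_def using assms(3) by (rule image_mono)
  ultimately show ?thesis
    using mirror_padding_disjoint[OF assms(1,2)] assms(3) by blast
qed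

lemma mirror_padding_copy_answer:
  assumes "finite Q" "finite a" "Q \<subseteq> UNIV \<times> {..<n}" "a \<subseteq> UNIV \<times> {n..<n + w}"
    and D: "(r, c) \<in> Q \<union> a \<union> mirror n w a" "(Suc r, c) \<in> Q \<union> a \<union> mirror n w a"
    and "n \<le> c"
    and no_H: "\<not> H_first_wins (Q \<union> a \<union> mirror n w a - {(r, c), (Suc r, c)})"
  shows "\<exists>p E. p \<in> E \<and> E \<subseteq> a \<and> V_first_wins (Q \<union> a \<union> mirror n w a - E - mirror n w E)"
proof -
  let ?Z = "Q \<union> a \<union> mirror n w a"
  have fin_Z: "finite ?Z"
    using assms(1,2) by (simp add: mirror_def)
  have col_Q: "c < n" if "(r, c) \<in> Q" for r c
    using subsetD[OF assms(3) that] by simp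
  have col_a: "n \<le> c \<and> c < n + w" if "(r, c) \<in> a" for r c
    using subsetD[OF assms(4) that] by simp
  note mem_mirror = mem_mirror_iff[OF assms(4)]
  consider "c < n + w" | "n + w \<le> c" by linarith
  then show ?thesis
  proof cases
    case 1
    then have D_a: "{(r, c), (Suc r, c)} \<subseteq> a"
      using D \<open>n \<le> c\<close> by (auto dest: col_Q simp: mem_mirror)
    have "(c - n, n + w + r) \<in> ?Z - {(r, c), (Suc r, c)}"
      "(c - n, Suc (n + w + r)) \<in> ?Z - {(r, c), (Suc r, c)}"
      using 1 \<open>n \<le> c\<close> D_a by (auto simp: mem_mirror)
    \<comment> \<open>Horizontal answers with the mirror image of Vertical's move.\<close>
    then have "V_first_wins (?Z - {(r, c), (Suc r, c)} - mirror n w {(r, c), (Suc r, c)})"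
      unfolding mirror_vertical_pair using fin_Z no_H by (intro V_first_wins_after_H_move) auto
    with D_a show ?thesis
      by (intro exI[of _ "(r, c)"] exI[of _ "{(r, c), (Suc r, c)}"]) simp
  next
    case 2
    let ?E = "{(c - (n + w), n + r), (c - (n + w), Suc (n + r))}"
    have D_mirror: "{(r, c), (Suc r, c)} \<subseteq> mirror n w a"
      using D 2 col_Q col_a by fastforce
    then have E_a: "?E \<subseteq> a"
      by (simp add: mem_mirror)
    have mirror_E: "mirror n w ?E = {(r, c), (Suc r, c)}"
      using 2 by (simp add: mirror_def)
    have "?E \<subseteq> ?Z - {(r, c), (Suc r, c)}"
      using E_a D_mirror mirror_padding_disjoint[OF assms(3,4)] by blast
    \<comment> \<open>Horizontal answers with the preimage of Vertical's move.\<close>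
    then have "V_first_wins (?Z - {(r, c), (Suc r, c)} - ?E)"
      using fin_Z no_H by (intro V_first_wins_after_H_move) auto
    moreover have "?Z - {(r, c), (Suc r, c)} - ?E = ?Z - ?E - mirror n w ?E"
      unfolding mirror_E by (simp only: Diff_eq Int_ac)
    ultimately show ?thesis
      using E_a by (intro exI[of _ "(c - (n + w), n + r)"] exI[of _ ?E]) simp
  qed
qed

text \<open>In game terms \<open>a\<close> and its mirror image are negatives of each other, so the padding
  adds a zero game; the proof is Horizontal's copy strategy between them.\<close>

lemma mirror_padding_first_wins:
  assumes "finite Q" "finite a" "Q \<subseteq> UNIV \<times> {..<n}" "a \<subseteq> UNIV \<times> {n..<n + w}"
  shows "(V_first_wins (Q \<union> a \<union> mirror n w a) \<longrightarrow> V_first_wins Q) \<and>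
         (H_first_wins Q \<longrightarrow> H_first_wins (Q \<union> a \<union> mirror n w a))"
  using assms
proof (induction "card Q + card a" arbitrary: Q a rule: less_induct)
  case less
  let ?Z = "Q \<union> a \<union> mirror n w a"
  have fin_Z: "finite ?Z"
    using less.prems(1,2) by (simp add: mirror_def)
  have remove_from_Q: "?Z - D = (Q - D) \<union> a \<union> mirror n w a" if "D \<subseteq> Q" for D
    using that mirror_padding_disjoint[OF less.prems(3,4)] by blast
  have IH_Q: "(V_first_wins ((Q - D) \<union> a \<union> mirror n w a) \<longrightarrow> V_first_wins (Q - D)) \<and>
      (H_first_wins (Q - D) \<longrightarrow> H_first_wins ((Q - D) \<union> a \<union> mirror n w a))"
    if "p \<in> D" "D \<subseteq> Q" for p D
    using that less.prems less.hyps[of "Q - D" a] psubset_card_mono[of Q "Q - D"] by auto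
  have IH_a: "V_first_wins Q"
    if "p \<in> E" "E \<subseteq> a" "V_first_wins (?Z - E - mirror n w E)" for p E
    using that less.prems less.hyps[of Q "a - E"] psubset_card_mono[of a "a - E"]
        mirror_padding_remove[OF less.prems(3,4) \<open>E \<subseteq> a\<close>] by auto
  have "V_first_wins Q" if V_Z: "V_first_wins ?Z"
  proof -
    obtain r c where D: "(r, c) \<in> ?Z" "(Suc r, c) \<in> ?Z"
      and no_H: "\<not> H_first_wins (?Z - {(r, c), (Suc r, c)})"
      using V_Z V_first_wins_iff[OF fin_Z] by blast
    show ?thesis
    proof (cases "c < n")
      case True
      have col_a: "n \<le> c" if "(r, c) \<in> a" for r c
        using subsetD[OF less.prems(4) that] by simp
      with True D have D_Q: "{(r, c), (Suc r, c)} \<subseteq> Q"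
        by (auto dest: col_a simp: mem_mirror_iff[OF less.prems(4)])
      then show ?thesis
        using IH_Q[of "(r, c)"] no_H remove_from_Q[OF D_Q]
          V_first_wins_iff[OF less.prems(1)] by auto
    next
      case False
      then obtain p E where "p \<in> E" "E \<subseteq> a" "V_first_wins (?Z - E - mirror n w E)"
        using mirror_padding_copy_answer[OF less.prems D _ no_H] by auto
      then show ?thesis
        by (rule IH_a)
    qed
  qed
  moreover have "H_first_wins ?Z" if H_Q: "H_first_wins Q"
  proof -
    obtain r c where D: "(r, c) \<in> Q" "(r, Suc c) \<in> Q"
      and no_V: "\<not> V_first_wins (Q - {(r, c), (r, Suc c)})"
      using H_Q H_first_wins_iff[OF less.prems(1)] by blast
    then have "\<not> V_first_wins (?Z - {(r, c), (r, Suc c)})"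
      using IH_Q[of "(r, c)"] remove_from_Q[of "{(r, c), (r, Suc c)}"] by auto
    then show ?thesis
      using D H_first_wins_iff[OF fin_Z] by blast
  qed
  ultimately show ?case by blast
qed

lemma outcome_class_OV_iff: "outcome_class S = OV \<longleftrightarrow> V_first_wins S \<and> \<not> H_first_wins S"
  by (simp add: outcome_class_def)

lemma board_mirror_padding:
  "board m n \<union> ({0..<m} \<times> {n..<n + m}) \<union> mirror n m ({0..<m} \<times> {n..<n + m}) =
   board m (n + 2 * m)"
proof (rule set_eqI)
  fix p :: "nat \<times> nat"
  obtain x y where p: "p = (x, y)" by (cases p)
  have "(x, y) \<in> mirror n m ({0..<m} \<times> {n..<n + m}) \<longleftrightarrow>
      n + m \<le> y \<and> (y - (n + m), n + x) \<in> {0..<m} \<times> {n..<n + m}"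
    by (rule mem_mirror_iff) auto
  then show "p \<in> board m n \<union> ({0..<m} \<times> {n..<n + m}) \<union> mirror n m ({0..<m} \<times> {n..<n + m}) \<longleftrightarrow>
        p \<in> board m (n + 2 * m)"
    unfolding p by (auto simp: board_def)
qed

lemma outcome_class_board_OV_shrink:
  assumes "outcome_class (board m (n + 2 * m)) = OV"
  shows "outcome_class (board m n) = OV"
proof -
  have "board m n \<subseteq> UNIV \<times> {..<n}"
    unfolding board_def by (intro Sigma_mono) auto
  then show ?thesis
    using mirror_padding_first_wins[of "board m n" "{0..<m} \<times> {n..<n + m}" n m] assms
    unfolding board_mirror_padding outcome_class_OV_iff by (auto simp: board_def)
qed

lemma down_closed_infinite_contains_progression:
  fixes P :: "nat \<Rightarrow> bool" and d :: nat
  assumes "d > 0" and down: "\<And>n. P (n + d) \<Longrightarrow> P n" and "infinite {n. P n}"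
  shows "\<exists>k<d. \<forall>i. P (k + d * i)"
proof -
  have down_iter: "P n" if "P (n + d * j)" for n j
    using that by (induction j arbitrary: n) (auto intro: down simp: add.assoc[symmetric])
  have "{n. P n} = (\<Union>k<d. {n. P n \<and> n mod d = k})"
    using \<open>d > 0\<close> by auto
  then obtain k where "k < d" and inf_k: "infinite {n. P n \<and> n mod d = k}"
    using \<open>infinite {n. P n}\<close> by auto
  have "P (k + d * i)" for i
  proof -
    have "\<forall>l. \<exists>n\<ge>l. P n \<and> n mod d = k"
      using inf_k by (simp add: infinite_nat_iff_unbounded_le)
    then obtain n where n: "P n" "n mod d = k" "k + d * i \<le> n"
      by blast
    have n_eq: "n = k + d * (n div d)"
      using n(2) mod_mult_div_eq[of n d] by simp
    with n(3) have "d * i \<le> d * (n div d)"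
      by linarith
    with \<open>d > 0\<close> obtain j where "n div d = i + j"
      using le_Suc_ex by auto
    with n_eq have "n = k + d * i + d * j"
      by (simp add: algebra_simps)
    with n(1) show ?thesis
      using down_iter by metis
  qed
  with \<open>k < d\<close> show ?thesis by blast
qed

theorem lemma3p4:
  fixes m :: nat
  assumes "m \<ge> 1"
    and "infinite {n::nat. n \<ge> 1 \<and> outcome_class (board m n) = OV}"
  shows "\<exists>k::nat. k < 2 * m \<and> (\<forall>i::nat. outcome_class (board m (k + 2 * m * i)) = OV)"
proof (rule down_closed_infinite_contains_progression)
  show "2 * m > 0"
    using assms(1) by simp
  show "outcome_class (board m n) = OV" if "outcome_class (board m (n + 2 * m)) = OV" for n
    using that by (rule outcome_class_board_OV_shrink)
  show "infinite {n. outcome_class (board m n) = OV}"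
    using assms(2) by (rule infinite_super[rotated]) blast
qed

end
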